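(* Let $\mathbf{S}$ be a distributive meet semilattice, $n\ge1$ an integer, and $U$ an upset of $\mathbf{S}$. Then for every $a\in\mathbf{S}$, $a$ belongs to the $n$-filter generated by $U$ if and only if there is a non-empty finite set $X\subseteq U$ such that $\bigwedge Y\in U$ for each $Y\subseteq_n X$ and $\bigwedge X\le a$. Moreover, the condition $\bigwedge X\le a$ may equivalently be replaced by $\bigwedge X=a$.
   Context: A meet semilattice is distributive if whenever $x\wedge y\le z$ there are $x'\ge x$ and $y'\ge y$ with $x'\wedge y'=z$. For a set $X$, $Y\subseteq_n X$ means $Y$ is a non-empty subset of $X$ with $|Y|\le n$. An $n$-filter on a meet semilattice $\mathbf{S}$ is an upset $F\subseteq\mathbf{S}$ such that for every non-empty finite $X\subseteq F$: if $\bigwedge Y\in F$ for every $Y\subseteq_n X$, then $\bigwedge X\in F$. The $n$-filters are closed under arbitrary intersections, and the $n$-filter generated by a set is the smallest $n$-filter containing it. *)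

theory Defs
  imports Main
begin

definition distributive_meet_semilattice :: "('a::semilattice_inf) itself \<Rightarrow> bool" where
  "distributive_meet_semilattice _ \<longleftrightarrow>
     (\<forall>x y z::'a. inf x y \<le> z \<longrightarrow> (\<exists>x' y'. x \<le> x' \<and> y \<le> y' \<and> inf x' y' = z))"

definition upset :: "('a::order) set \<Rightarrow> bool" where
  "upset U \<longleftrightarrow> (\<forall>x y. x \<in> U \<longrightarrow> x \<le> y \<longrightarrow> y \<in> U)"

definition subset_n :: "'a set \<Rightarrow> nat \<Rightarrow> 'a set \<Rightarrow> bool" where
  "subset_n Y n X \<longleftrightarrow> Y \<noteq> {} \<and> Y \<subseteq> X \<and> finite Y \<and> card Y \<le> n"

definition n_filter :: "nat \<Rightarrow> ('a::semilattice_inf) set \<Rightarrow> bool" where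
  "n_filter n F \<longleftrightarrow> upset F \<and>
     (\<forall>X. X \<noteq> {} \<and> finite X \<and> X \<subseteq> F \<longrightarrow>
        (\<forall>Y. subset_n Y n X \<longrightarrow> Inf_fin Y \<in> F) \<longrightarrow> Inf_fin X \<in> F)"

definition n_filter_generated :: "nat \<Rightarrow> ('a::semilattice_inf) set \<Rightarrow> 'a set" where
  "n_filter_generated n U = \<Inter>{F. n_filter n F \<and> U \<subseteq> F}"

end

theory Submission
  imports Defs
begin

text \<open>Call a non-empty finite X \<subseteq> U n-admissible if \<And>Y \<in> U for every Y \<subseteq>_n X.
  The upset G of meets of n-admissible sets contains U and lies in every n-filter containing U;
  the point is that G is itself an n-filter. Distributivity enters as a refinement property:
  if \<And>A \<le> c then c = \<And>Q for a finite Q each element of which lies above an element of A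
  (this also turns \<le> a into = a in the characterisation). Iterating it, finitely many A_i with
  \<And>A_i \<le> c have a common such refinement Q. Now let Z satisfy the premise of the n-filter
  rule for G, so every W \<subseteq>_n Z lies above \<And>X_W for an admissible X_W. Write each z \<in> Z as
  the meet of a common refinement Q_z of the X_W with z \<in> W. The union of the Q_z has meet \<And>Z,
  and it is admissible: any n of its elements come from at most n of the Q_z, hence all refine
  one X_W.\<close>

definition refines :: "('a::order) set \<Rightarrow> 'a set \<Rightarrow> bool" where
  "refines Q X \<longleftrightarrow> (\<forall>q\<in>Q. \<exists>x\<in>X. x \<le> q)"

lemma refines_trans: "refines Q X \<Longrightarrow> refines X A \<Longrightarrow> refines Q A"
  unfolding refines_def by (meson order_trans)

lemma refines_subset: "Y \<subseteq> Q \<Longrightarrow> refines Q X \<Longrightarrow> refines Y X"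
  unfolding refines_def by blast

lemma refines_singleton_Inf_fin: "finite Q \<Longrightarrow> refines Q {Inf_fin Q}"
  unfolding refines_def by (simp add: Inf_fin.coboundedI)

lemma Inf_fin_le_if_refines:
  fixes X :: "('a::semilattice_inf) set"
  assumes "refines Y X" "finite X" "finite Y" "Y \<noteq> {}"
  shows "Inf_fin X \<le> Inf_fin Y"
proof (rule Inf_fin.boundedI[OF assms(3,4)])
  fix y assume "y \<in> Y"
  then obtain x where "x \<in> X" "x \<le> y" using assms(1) unfolding refines_def by blast
  then show "Inf_fin X \<le> y" using assms(2) Inf_fin.coboundedI[of X x] by simp
qed

lemma Inf_fin_UNION:
  fixes Q :: "'i \<Rightarrow> ('a::semilattice_inf) set"
  assumes "finite I" "I \<noteq> {}" "\<And>i. i \<in> I \<Longrightarrow> finite (Q i) \<and> Q i \<noteq> {}"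
  shows "Inf_fin (\<Union>i\<in>I. Q i) = Inf_fin ((\<lambda>i. Inf_fin (Q i)) ` I)"
proof (rule order.antisym)
  have fin: "finite (\<Union>i\<in>I. Q i)" using assms(1,3) by blast
  show "Inf_fin (\<Union>i\<in>I. Q i) \<le> Inf_fin ((\<lambda>i. Inf_fin (Q i)) ` I)"
  proof (rule Inf_fin.boundedI)
    fix a assume "a \<in> (\<lambda>i. Inf_fin (Q i)) ` I"
    then obtain i where "i \<in> I" "a = Inf_fin (Q i)" by blast
    then show "Inf_fin (\<Union>i\<in>I. Q i) \<le> a"
      using assms(3) fin by (auto intro: Inf_fin.subset_imp)
  qed (use assms in auto)
  show "Inf_fin ((\<lambda>i. Inf_fin (Q i)) ` I) \<le> Inf_fin (\<Union>i\<in>I. Q i)"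
  proof (rule Inf_fin.boundedI[OF fin])
    fix q assume "q \<in> (\<Union>i\<in>I. Q i)"
    then obtain i where "i \<in> I" "q \<in> Q i" by blast
    then have "Inf_fin ((\<lambda>i. Inf_fin (Q i)) ` I) \<le> Inf_fin (Q i)" "Inf_fin (Q i) \<le> q"
      using assms by (auto intro: Inf_fin.coboundedI)
    then show "Inf_fin ((\<lambda>i. Inf_fin (Q i)) ` I) \<le> q" by (rule order_trans)
  qed (use assms in auto)
qed

lemma distributive_Inf_fin_le_imp_eq_refinement:
  fixes A :: "('a::semilattice_inf) set"
  assumes D: "distributive_meet_semilattice TYPE('a)"
    and "finite A" "A \<noteq> {}" "Inf_fin A \<le> c"
  obtains Q where "finite Q" "Q \<noteq> {}" "Inf_fin Q = c" "refines Q A"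
  using assms(2-4)
proof (induction A arbitrary: c thesis rule: finite_ne_induct)
  case (singleton x)
  then show ?case using singleton.prems(1)[of "{c}"] by (simp add: refines_def)
next
  case (insert x A)
  then have "inf x (Inf_fin A) \<le> c" by simp
  then obtain x' y' where xy: "x \<le> x'" "Inf_fin A \<le> y'" "inf x' y' = c"
    using D unfolding distributive_meet_semilattice_def by blast
  obtain Q where "finite Q" "Q \<noteq> {}" "Inf_fin Q = y'" "refines Q A"
    using insert.IH[OF _ xy(2)] by blast
  then show ?case
    using insert.prems(1)[of "insert x' Q"] xy by (auto simp: refines_def)
qed

lemma distributive_refinement_above:
  fixes A :: "('a::semilattice_inf) set"
  assumes D: "distributive_meet_semilattice TYPE('a)"
    and "finite A" "A \<noteq> {}" "finite B" "B \<noteq> {}" "\<And>a. a \<in> A \<Longrightarrow> Inf_fin B \<le> a"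
  obtains Q where "finite Q" "Q \<noteq> {}" "Inf_fin Q = Inf_fin A" "refines Q A" "refines Q B"
proof -
  have "\<exists>Q. finite Q \<and> Q \<noteq> {} \<and> Inf_fin Q = a \<and> refines Q B" if "a \<in> A" for a
    using distributive_Inf_fin_le_imp_eq_refinement[OF D assms(4,5) assms(6)[OF that]] by blast
  then obtain Qa where Qa: "\<And>a. a \<in> A \<Longrightarrow> finite (Qa a) \<and> Qa a \<noteq> {} \<and> Inf_fin (Qa a) = a \<and> refines (Qa a) B"
    by metis
  let ?Q = "\<Union>a\<in>A. Qa a"
  have "Inf_fin ?Q = Inf_fin ((\<lambda>a. Inf_fin (Qa a)) ` A)"
    using Inf_fin_UNION[OF assms(2,3)] Qa by blast
  also have "\<dots> = Inf_fin A"
    using Qa by (simp cong: image_cong)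
  finally have "Inf_fin ?Q = Inf_fin A" .
  moreover have "refines ?Q A"
  proof -
    have "refines (Qa a) A" if "a \<in> A" for a
      using refines_singleton_Inf_fin[of "Qa a"] Qa[OF that] that unfolding refines_def by auto
    then show ?thesis unfolding refines_def by blast
  qed
  moreover have "refines ?Q B"
    using Qa unfolding refines_def by blast
  moreover have "finite ?Q" "?Q \<noteq> {}"
    using Qa assms(2,3) by auto
  ultimately show thesis
    using that by blast
qed

lemma distributive_common_refinement_pair:
  fixes A :: "('a::semilattice_inf) set"
  assumes D: "distributive_meet_semilattice TYPE('a)"
    and "finite A" "A \<noteq> {}" "finite B" "B \<noteq> {}" "Inf_fin A \<le> c" "Inf_fin B \<le> c"
  obtains Q where "finite Q" "Q \<noteq> {}" "Inf_fin Q = c" "refines Q A" "refines Q B"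
proof -
  obtain A' where A': "finite A'" "A' \<noteq> {}" "Inf_fin A' = c" "refines A' A"
    using distributive_Inf_fin_le_imp_eq_refinement[OF D assms(2,3,6)] .
  have "Inf_fin B \<le> a'" if "a' \<in> A'" for a'
    using that A'(1,3) assms(7) Inf_fin.coboundedI[of A' a'] by simp
  then obtain Q where Q: "finite Q" "Q \<noteq> {}" "Inf_fin Q = Inf_fin A'" "refines Q A'" "refines Q B"
    using distributive_refinement_above[OF D A'(1,2) assms(4,5)] by blast
  show thesis
    by (rule that[OF Q(1,2) _ refines_trans[OF Q(4) A'(4)] Q(5)]) (use Q(3) A'(3) in simp)
qed

lemma distributive_common_refinement:
  fixes A :: "'i \<Rightarrow> ('a::semilattice_inf) set"
  assumes D: "distributive_meet_semilattice TYPE('a)"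
    and "finite I" "\<And>i. i \<in> I \<Longrightarrow> finite (A i) \<and> A i \<noteq> {} \<and> Inf_fin (A i) \<le> c"
  obtains Q where "finite Q" "Q \<noteq> {}" "Inf_fin Q = c" "\<And>i. i \<in> I \<Longrightarrow> refines Q (A i)"
proof -
  have "\<exists>Q. finite Q \<and> Q \<noteq> {} \<and> Inf_fin Q = c \<and> (\<forall>i\<in>I. refines Q (A i))"
    using assms(2,3)
  proof (induction I rule: finite_induct)
    case empty
    show ?case by (rule exI[of _ "{c}"]) simp
  next
    case (insert i I)
    obtain Q' where Q': "finite Q'" "Q' \<noteq> {}" "Inf_fin Q' = c" "\<forall>j\<in>I. refines Q' (A j)"
      using insert.IH insert.prems by auto
    have Ai: "finite (A i)" "A i \<noteq> {}" "Inf_fin (A i) \<le> c"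
      using insert.prems[of i] by auto
    obtain Q where Q: "finite Q" "Q \<noteq> {}" "Inf_fin Q = c" "refines Q Q'" "refines Q (A i)"
      using distributive_common_refinement_pair[OF D Q'(1,2) Ai(1,2) _ Ai(3)] Q'(3) by auto
    have "\<forall>j\<in>insert i I. refines Q (A j)"
      using Q(5) refines_trans[OF Q(4)] Q'(4) by blast
    then show ?case
      using Q(1-3) by blast
  qed
  then show thesis using that by blast
qed

definition n_admissible :: "nat \<Rightarrow> ('a::semilattice_inf) set \<Rightarrow> 'a set \<Rightarrow> bool" where
  "n_admissible n U X \<longleftrightarrow>
     X \<noteq> {} \<and> finite X \<and> X \<subseteq> U \<and> (\<forall>Y. subset_n Y n X \<longrightarrow> Inf_fin Y \<in> U)"

lemma n_admissibleI:
  assumes "n \<ge> 1" "X \<noteq> {}" "finite X" "\<And>Y. subset_n Y n X \<Longrightarrow> Inf_fin Y \<in> U"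
  shows "n_admissible n U X"
proof -
  have "x \<in> U" if "x \<in> X" for x
    using assms(4)[of "{x}"] that assms(1) by (simp add: subset_n_def)
  then have "X \<subseteq> U" by blast
  then show ?thesis using assms unfolding n_admissible_def by blast
qed

lemma n_admissible_singleton: "u \<in> U \<Longrightarrow> n_admissible n U {u}"
  unfolding n_admissible_def subset_n_def by (auto simp: subset_singleton_iff)

lemma Inf_fin_mem_if_refines_n_admissible:
  assumes U: "upset U" and X: "n_admissible n U X"
    and Y: "finite Y" "Y \<noteq> {}" "card Y \<le> n" "refines Y X"
  shows "Inf_fin Y \<in> U"
proof -
  obtain g where g: "\<And>y. y \<in> Y \<Longrightarrow> g y \<in> X \<and> g y \<le> y"
    using Y(4) unfolding refines_def by metis
  have "subset_n (g ` Y) n X"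
    using Y g card_image_le[OF Y(1), of g] unfolding subset_n_def by auto
  then have "Inf_fin (g ` Y) \<in> U" using X unfolding n_admissible_def by blast
  moreover have "Inf_fin (g ` Y) \<le> Inf_fin Y"
    using Y g by (intro Inf_fin_le_if_refines) (auto simp: refines_def)
  ultimately show ?thesis using U unfolding upset_def by blast
qed

lemma n_admissible_if_refines:
  assumes U: "upset U" and X: "n_admissible n U X"
    and Q: "finite Q" "Q \<noteq> {}" "refines Q X"
  shows "n_admissible n U Q"
proof -
  have "Q \<subseteq> U"
    using Q(3) X U unfolding refines_def n_admissible_def upset_def by blast
  moreover have "Inf_fin Y \<in> U" if "subset_n Y n Q" for Y
  proof -
    from that have Y: "finite Y" "Y \<noteq> {}" "card Y \<le> n" "Y \<subseteq> Q"
      unfolding subset_n_def by auto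
    show ?thesis
      using Inf_fin_mem_if_refines_n_admissible[OF U X Y(1-3) refines_subset[OF Y(4) Q(3)]] .
  qed
  ultimately show ?thesis using Q unfolding n_admissible_def by blast
qed

lemma n_admissible_UNION_refinements:
  fixes Q :: "'a \<Rightarrow> ('a::semilattice_inf) set"
  assumes n: "n \<ge> 1" and U: "upset U" and Z: "finite Z" "Z \<noteq> {}"
    and adm: "\<And>W. subset_n W n Z \<Longrightarrow> n_admissible n U (X W)"
    and Q: "\<And>z. z \<in> Z \<Longrightarrow> finite (Q z) \<and> Q z \<noteq> {}"
    and ref: "\<And>z W. subset_n W n Z \<Longrightarrow> z \<in> W \<Longrightarrow> refines (Q z) (X W)"
  shows "n_admissible n U (\<Union>z\<in>Z. Q z)"
proof (rule n_admissibleI[OF n])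
  show "(\<Union>z\<in>Z. Q z) \<noteq> {}" "finite (\<Union>z\<in>Z. Q z)" using Z Q by auto
next
  fix Y assume "subset_n Y n (\<Union>z\<in>Z. Q z)"
  then have Y: "Y \<noteq> {}" "Y \<subseteq> (\<Union>z\<in>Z. Q z)" "finite Y" "card Y \<le> n"
    unfolding subset_n_def by auto
  have "\<forall>y\<in>Y. \<exists>z\<in>Z. y \<in> Q z" using Y(2) by blast
  then obtain z where z: "\<And>y. y \<in> Y \<Longrightarrow> z y \<in> Z \<and> y \<in> Q (z y)"
    by metis
  have W: "subset_n (z ` Y) n Z"
    using Y z card_image_le[OF Y(3), of z] unfolding subset_n_def by auto
  have "refines Y (X (z ` Y))"
    using ref[OF W] z unfolding refines_def by blast
  then show "Inf_fin Y \<in> U"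
    using Inf_fin_mem_if_refines_n_admissible[OF U adm[OF W]] Y by blast
qed

lemma Inf_fin_n_admissible_mem_n_filter:
  assumes "n_filter n F" "U \<subseteq> F" "n_admissible n U X"
  shows "Inf_fin X \<in> F"
  using assms unfolding n_filter_def n_admissible_def by blast

lemma distributive_common_refinement_at_member:
  fixes X :: "('a::semilattice_inf) set \<Rightarrow> 'a set"
  assumes D: "distributive_meet_semilattice TYPE('a)" and "finite Z" "z \<in> Z"
    and X: "\<And>W. subset_n W n Z \<Longrightarrow> finite (X W) \<and> X W \<noteq> {} \<and> Inf_fin (X W) \<le> Inf_fin W"
  shows "\<exists>Q. finite Q \<and> Q \<noteq> {} \<and> Inf_fin Q = z \<and> (\<forall>W. subset_n W n Z \<and> z \<in> W \<longrightarrow> refines Q (X W))"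
proof -
  have fin: "finite {W. subset_n W n Z \<and> z \<in> W}"
    by (rule finite_subset[of _ "Pow Z"]) (use assms(2) in \<open>auto simp: subset_n_def\<close>)
  have below: "finite (X W) \<and> X W \<noteq> {} \<and> Inf_fin (X W) \<le> z"
    if "W \<in> {W. subset_n W n Z \<and> z \<in> W}" for W
  proof -
    from that have W: "subset_n W n Z" "z \<in> W" by auto
    then have "Inf_fin W \<le> z" using Inf_fin.coboundedI[of W z] unfolding subset_n_def by blast
    with X[OF W(1)] show ?thesis by (meson order.trans)
  qed
  show ?thesis
  proof (rule distributive_common_refinement[OF D fin below])
    fix Q assume Q: "finite Q" "Q \<noteq> {}" "Inf_fin Q = z"
      and "\<And>W. W \<in> {W. subset_n W n Z \<and> z \<in> W} \<Longrightarrow> refines Q (X W)"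
    then have "\<forall>W. subset_n W n Z \<and> z \<in> W \<longrightarrow> refines Q (X W)" by simp
    with Q show ?thesis by blast
  qed
qed

lemma n_admissible_meet_of_witnesses:
  fixes U :: "('a::semilattice_inf) set"
  assumes D: "distributive_meet_semilattice TYPE('a)" and n: "n \<ge> 1" and U: "upset U"
    and Z: "finite Z" "Z \<noteq> {}"
    and X: "\<And>W. subset_n W n Z \<Longrightarrow> n_admissible n U (X W) \<and> Inf_fin (X W) \<le> Inf_fin W"
  shows "\<exists>X'. n_admissible n U X' \<and> Inf_fin X' = Inf_fin Z"
proof -
  have "\<exists>Q. finite Q \<and> Q \<noteq> {} \<and> Inf_fin Q = z \<and> (\<forall>W. subset_n W n Z \<and> z \<in> W \<longrightarrow> refines Q (X W))"
    if "z \<in> Z" for z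
    using distributive_common_refinement_at_member[OF D Z(1) that] X
    unfolding n_admissible_def by blast
  then obtain Q where Q: "\<And>z. z \<in> Z \<Longrightarrow> finite (Q z) \<and> Q z \<noteq> {} \<and> Inf_fin (Q z) = z \<and>
      (\<forall>W. subset_n W n Z \<and> z \<in> W \<longrightarrow> refines (Q z) (X W))"
    by metis
  have "n_admissible n U (\<Union>z\<in>Z. Q z)"
  proof (rule n_admissible_UNION_refinements[OF n U Z])
    show "\<And>W. subset_n W n Z \<Longrightarrow> n_admissible n U (X W)" using X by blast
    show "\<And>z. z \<in> Z \<Longrightarrow> finite (Q z) \<and> Q z \<noteq> {}" using Q by blast
    fix z W assume W: "subset_n W n Z" "z \<in> W"
    then have "z \<in> Z" unfolding subset_n_def by blast
    then show "refines (Q z) (X W)" using Q W by blast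
  qed
  moreover have "Inf_fin (\<Union>z\<in>Z. Q z) = Inf_fin Z"
  proof -
    have "Inf_fin (\<Union>z\<in>Z. Q z) = Inf_fin ((\<lambda>z. Inf_fin (Q z)) ` Z)"
      by (rule Inf_fin_UNION) (use Z Q in auto)
    also have "(\<lambda>z. Inf_fin (Q z)) ` Z = (\<lambda>z. z) ` Z"
      by (rule image_cong) (use Q in auto)
    finally show ?thesis by simp
  qed
  ultimately show ?thesis by blast
qed

lemma n_filter_above_admissible_meets:
  fixes U :: "('a::semilattice_inf) set"
  assumes D: "distributive_meet_semilattice TYPE('a)" and n: "n \<ge> 1" and U: "upset U"
  shows "n_filter n {a. \<exists>X. n_admissible n U X \<and> Inf_fin X \<le> a}" (is "n_filter n ?G")
  unfolding n_filter_def
proof (intro conjI allI impI)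
  show "upset ?G" unfolding upset_def
  proof (intro allI impI)
    fix a b assume "a \<in> ?G" "a \<le> b"
    then obtain X where "n_admissible n U X" "Inf_fin X \<le> a" by blast
    moreover from this(2) \<open>a \<le> b\<close> have "Inf_fin X \<le> b" by (rule order.trans)
    ultimately show "b \<in> ?G" by blast
  qed
next
  fix Z assume Z: "Z \<noteq> {} \<and> finite Z \<and> Z \<subseteq> ?G"
    and "\<forall>W. subset_n W n Z \<longrightarrow> Inf_fin W \<in> ?G"
  then have "\<forall>W. \<exists>X. subset_n W n Z \<longrightarrow> n_admissible n U X \<and> Inf_fin X \<le> Inf_fin W"
    by blast
  then obtain X where "\<And>W. subset_n W n Z \<Longrightarrow> n_admissible n U (X W) \<and> Inf_fin (X W) \<le> Inf_fin W"
    by metis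
  then obtain X' where "n_admissible n U X'" "Inf_fin X' = Inf_fin Z"
    using n_admissible_meet_of_witnesses[OF D n U] Z by blast
  then show "Inf_fin Z \<in> ?G" by force
qed

lemma n_filter_generated_eq:
  fixes U :: "('a::semilattice_inf) set"
  assumes "distributive_meet_semilattice TYPE('a)" "n \<ge> 1" "upset U"
  shows "n_filter_generated n U = {a. \<exists>X. n_admissible n U X \<and> Inf_fin X \<le> a}"
    (is "_ = ?G")
proof
  have "U \<subseteq> ?G"
  proof
    fix u assume "u \<in> U"
    then have "n_admissible n U {u} \<and> Inf_fin {u} \<le> u"
      by (simp add: n_admissible_singleton)
    then show "u \<in> ?G" by blast
  qed
  then show "n_filter_generated n U \<subseteq> ?G"
    unfolding n_filter_generated_def
    by (intro Inter_lower) (simp add: n_filter_above_admissible_meets[OF assms])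
next
  show "?G \<subseteq> n_filter_generated n U"
  proof
    fix a assume "a \<in> ?G"
    then obtain X where X: "n_admissible n U X" "Inf_fin X \<le> a" by blast
    show "a \<in> n_filter_generated n U"
      unfolding n_filter_generated_def
    proof
      fix F assume "F \<in> {F. n_filter n F \<and> U \<subseteq> F}"
      then have F: "n_filter n F" "U \<subseteq> F" by auto
      then have "Inf_fin X \<in> F" using Inf_fin_n_admissible_mem_n_filter X(1) by blast
      then show "a \<in> F" using F(1) X(2) unfolding n_filter_def upset_def by blast
    qed
  qed
qed

lemma n_admissible_Inf_fin_le_iff_eq:
  fixes U :: "('a::semilattice_inf) set"
  assumes D: "distributive_meet_semilattice TYPE('a)" and U: "upset U"
  shows "(\<exists>X. n_admissible n U X \<and> Inf_fin X \<le> a) \<longleftrightarrow> (\<exists>X. n_admissible n U X \<and> Inf_fin X = a)"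
proof
  assume "\<exists>X. n_admissible n U X \<and> Inf_fin X \<le> a"
  then obtain X where X: "n_admissible n U X" "Inf_fin X \<le> a" by blast
  then have "finite X" "X \<noteq> {}" unfolding n_admissible_def by auto
  then obtain Q where "finite Q" "Q \<noteq> {}" "Inf_fin Q = a" "refines Q X"
    using distributive_Inf_fin_le_imp_eq_refinement[OF D _ _ X(2)] by blast
  then show "\<exists>X. n_admissible n U X \<and> Inf_fin X = a"
    using n_admissible_if_refines[OF U X(1)] by blast
next
  assume "\<exists>X. n_admissible n U X \<and> Inf_fin X = a"
  then show "\<exists>X. n_admissible n U X \<and> Inf_fin X \<le> a" by fastforce
qed

theorem mainTheorem2:
  fixes U :: "('a::semilattice_inf) set" and n :: nat
  assumes "distributive_meet_semilattice TYPE('a)"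
    and "n \<ge> 1"
    and "upset U"
  shows "\<forall>a::'a.
      (a \<in> n_filter_generated n U \<longleftrightarrow>
         (\<exists>X. X \<noteq> {} \<and> finite X \<and> X \<subseteq> U \<and>
              (\<forall>Y. subset_n Y n X \<longrightarrow> Inf_fin Y \<in> U) \<and> Inf_fin X \<le> a))
    \<and> (a \<in> n_filter_generated n U \<longleftrightarrow>
         (\<exists>X. X \<noteq> {} \<and> finite X \<and> X \<subseteq> U \<and>
              (\<forall>Y. subset_n Y n X \<longrightarrow> Inf_fin Y \<in> U) \<and> Inf_fin X = a))"
proof (intro allI conjI)
  fix a
  have le: "a \<in> n_filter_generated n U \<longleftrightarrow> (\<exists>X. n_admissible n U X \<and> Inf_fin X \<le> a)"
    using n_filter_generated_eq[OF assms] by simp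
  from le n_admissible_Inf_fin_le_iff_eq[OF assms(1,3)]
  have eq: "a \<in> n_filter_generated n U \<longleftrightarrow> (\<exists>X. n_admissible n U X \<and> Inf_fin X = a)"
    by (rule trans)
  show "a \<in> n_filter_generated n U \<longleftrightarrow>
      (\<exists>X. X \<noteq> {} \<and> finite X \<and> X \<subseteq> U \<and>
        (\<forall>Y. subset_n Y n X \<longrightarrow> Inf_fin Y \<in> U) \<and> Inf_fin X \<le> a)"
    using le unfolding n_admissible_def conj_assoc .
  show "a \<in> n_filter_generated n U \<longleftrightarrow>
      (\<exists>X. X \<noteq> {} \<and> finite X \<and> X \<subseteq> U \<and>
        (\<forall>Y. subset_n Y n X \<longrightarrow> Inf_fin Y \<in> U) \<and> Inf_fin X = a)"
    using eq unfolding n_admissible_def conj_assoc .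
qed

end
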